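(* Suppose that there exists a ${}^\lambda\mathrm{H}_t(m,n;s,k)$ and set $v=\frac{2nk}{\lambda}+t$. If either $v$ is odd, or $v$ and $t$ are both even, then $\lambda$ divides $nk$.
   Context: Let $m,n,s,k,\lambda,t$ be positive integers with $t$ dividing $\frac{2nk}{\lambda}$, let $v=\frac{2nk}{\lambda}+t$ and let $J$ be the subgroup of $\mathbb{Z}_v$ of order $t$. A $\lambda$-fold Heffter array ${}^\lambda\mathrm{H}_t(m,n;s,k)$ is an $m\times n$ partially filled array with entries in $\mathbb{Z}_v$ such that: (a) each row has exactly $s$ and each column exactly $k$ filled cells; (b) the multiset $\{\pm x: x$ an entry of a filled cell$\}$ (counted over all filled cells) contains each element of $\mathbb{Z}_v\setminus J$ exactly $\lambda$ times and no element of $J$; (c) every row and every column sums to $0$ in $\mathbb{Z}_v$. *)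

theory Defs
  imports Main
begin

text \<open>A partially filled m x n array with entries in Z_v is modelled as
  A :: nat \<Rightarrow> nat \<Rightarrow> nat option, where A i j = None means cell (i,j) is empty
  and A i j = Some a (with a < v) means the cell contains the residue a of Z_v.
  The subgroup J of Z_v of order t is the set of residues divisible by v div t.
  For y in Z_v, the multiplicity of y in the multiset of all \<plusminus>x (x an entry) is
  the number of cells with entry y plus the number of cells with entry -y.\<close>

definition heffter_array ::
  "nat \<Rightarrow> nat \<Rightarrow> nat \<Rightarrow> nat \<Rightarrow> nat \<Rightarrow> nat \<Rightarrow> (nat \<Rightarrow> nat \<Rightarrow> nat option) \<Rightarrow> bool" where
  "heffter_array lam t m n s k A \<longleftrightarrow>
     (let v = 2 * n * k div lam + t in
      (\<forall>i j. A i j \<noteq> None \<longrightarrow> i < m \<and> j < n) \<and>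
      (\<forall>i j a. A i j = Some a \<longrightarrow> a < v) \<and>
      (\<forall>i<m. card {j. j < n \<and> A i j \<noteq> None} = s) \<and>
      (\<forall>j<n. card {i. i < m \<and> A i j \<noteq> None} = k) \<and>
      (\<forall>y<v. card {(i, j). i < m \<and> j < n \<and> A i j = Some y}
              + card {(i, j). i < m \<and> j < n \<and> A i j = Some ((v - y) mod v)}
             = (if (v div t) dvd y then 0 else lam)) \<and>
      (\<forall>i<m. (\<Sum>j<n. case A i j of None \<Rightarrow> 0 | Some a \<Rightarrow> a) mod v = 0) \<and>
      (\<forall>j<n. (\<Sum>i<m. case A i j of None \<Rightarrow> 0 | Some a \<Rightarrow> a) mod v = 0))"

end

theory Submission
  imports Defs
begin

text \<open>Put \<open>N = 2nk/\<lambda> = v - t\<close>. Since \<open>t\<close> divides \<open>N\<close>, it divides \<open>v = N + t\<close>; so if \<open>v\<close> is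
  odd then \<open>t\<close> is odd, and in either case \<open>N = v - t\<close> is even. Then \<open>\<lambda> N = 2nk\<close> gives
  \<open>\<lambda> (N/2) = nk\<close>.\<close>

lemma even_if_dvd_and_parity:
  fixes N t :: nat
  assumes "t dvd N"
    and "odd (N + t) \<or> (even (N + t) \<and> even t)"
  shows "even N"
proof (cases "odd (N + t)")
  case True
  have "t dvd N + t" using \<open>t dvd N\<close> by simp
  then have "odd t" using True dvd_trans by blast
  with True show ?thesis by simp
next
  case False
  with assms(2) show ?thesis by simp
qed

lemma dvd_half_if_mult_even:
  fixes lam N c :: nat
  assumes "lam * N = 2 * c" and "even N"
  shows "lam dvd c"
proof -
  obtain M where "N = 2 * M" using \<open>even N\<close> by blast
  with assms(1) have "c = lam * M" by simp
  then show ?thesis by simp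
qed

theorem proposition4p1:
  fixes m n s k lam t :: nat
  assumes "0 < m" "0 < n" "0 < s" "0 < k" "0 < lam" "0 < t"
    and "lam dvd 2 * n * k"
    and "t dvd 2 * n * k div lam"
    and "\<exists>A. heffter_array lam t m n s k A"
    and "odd (2 * n * k div lam + t) \<or> (even (2 * n * k div lam + t) \<and> even t)"
  shows "lam dvd n * k"
proof -
  define N where "N = 2 * n * k div lam"
  have "lam * N = 2 * (n * k)" using assms(7) unfolding N_def by simp
  moreover have "even N"
    using even_if_dvd_and_parity assms(8,10) unfolding N_def by blast
  ultimately show ?thesis by (rule dvd_half_if_mult_even)
qed

end
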